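(* There is no arithmetical structure $(r_1,\dots,r_{18})$ on $K_{18}$ with $r_1=79$.
   Context: An arithmetical structure on the complete graph $K_n$ is an $n$-tuple $(r_1,r_2,\dots,r_n)$ of positive integers with $\gcd(r_1,\dots,r_n)=1$ such that $r_j$ divides $\sum_{i=1}^n r_i$ for every $j$. The entries are always listed so that $r_1\geq r_2\geq\dots\geq r_n$; thus $r_1$ is the largest value of the structure. *)

theory Defs
  imports Main
begin

text \<open>An arithmetical structure on the complete graph K_n, given as an n-tuple
  (r 1, ..., r n) of positive integers (indices 1..n), listed in non-increasing order,
  with gcd 1 and each r j dividing the total sum.\<close>

definition arith_structure_Kn :: "nat \<Rightarrow> (nat \<Rightarrow> nat) \<Rightarrow> bool" where
  "arith_structure_Kn n r \<longleftrightarrow>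
     (\<forall>i\<in>{1..n}. 0 < r i) \<and>
     (\<forall>i j. 1 \<le> i \<longrightarrow> i \<le> j \<longrightarrow> j \<le> n \<longrightarrow> r j \<le> r i) \<and>
     Gcd (r ` {1..n}) = 1 \<and>
     (\<forall>j\<in>{1..n}. r j dvd (\<Sum>i=1..n. r i))"

end

theory Submission
  imports Defs "HOL-Computational_Algebra.Primes"
begin

text \<open>Let \<open>S = 79 m\<close> be the sum. As 79 is prime, every entry other than 79 divides \<open>m\<close>,
  so if \<open>a\<close> entries equal 79 the remaining \<open>18 - a\<close> entries are divisors of \<open>m\<close> summing
  to \<open>79 (m - a)\<close>. Bounding each of them by \<open>m\<close> forces \<open>m = a + 1\<close> and \<open>7 \<le> m \<le> 12\<close>;
  then the total deficit \<open>\<Sum> (m - r\<^sub>i) = m (19 - m) - 79\<close> would have to be a sum of numbers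
  \<open>m - d\<close> with \<open>d\<close> a proper divisor of \<open>m\<close>, which a short search rules out in all six cases.\<close>

inductive sum_of :: "nat set \<Rightarrow> nat \<Rightarrow> bool" for A where
  zero [simp]: "sum_of A 0"
| add: "a \<in> A \<Longrightarrow> sum_of A s \<Longrightarrow> sum_of A (a + s)"

lemma sum_of_sum:
  assumes "finite J" "\<forall>i\<in>J. f i = 0 \<or> f i \<in> A"
  shows "sum_of A (sum f J)"
  using assms by (induction J rule: finite_induct) (auto intro: sum_of.add)

text \<open>As a simp rule this decides \<open>sum_of A s\<close> for a concrete finite \<open>A\<close> and numeral \<open>s\<close>;
  it terminates only if \<open>0 \<notin> A\<close>.\<close>

lemma sum_of_pos_iff:
  assumes "0 < s"
  shows "sum_of A s \<longleftrightarrow> (\<exists>a\<in>A. a \<le> s \<and> sum_of A (s - a))"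
proof
  assume "sum_of A s"
  then show "\<exists>a\<in>A. a \<le> s \<and> sum_of A (s - a)"
  proof cases
    case (add a s')
    then show ?thesis by (intro bexI[of _ a]) auto
  qed (use assms in simp)
next
  assume "\<exists>a\<in>A. a \<le> s \<and> sum_of A (s - a)"
  then show "sum_of A s"
    by (metis le_add_diff_inverse sum_of.add)
qed

lemma deficit_sum_of_proper_divisors:
  fixes f :: "'a \<Rightarrow> nat"
  assumes J: "finite J" and dvd: "\<forall>i\<in>J. f i dvd m" and m: "0 < m"
  shows "sum_of ((\<lambda>d. m - d) ` {d. d dvd m \<and> d < m}) (m * card J - sum f J)"
proof -
  have le: "f i \<le> m" if "i \<in> J" for i
    using dvd m that by (simp add: dvd_imp_le)
  have "m * card J - sum f J = (\<Sum>i\<in>J. m - f i)"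
    using le by (simp add: sum_subtractf_nat mult.commute)
  moreover have "sum_of ((\<lambda>d. m - d) ` {d. d dvd m \<and> d < m}) (\<Sum>i\<in>J. m - f i)"
  proof (rule sum_of_sum[OF J], intro ballI)
    fix i
    assume "i \<in> J"
    show "m - f i = 0 \<or> m - f i \<in> (\<lambda>d. m - d) ` {d. d dvd m \<and> d < m}"
    proof (cases "f i < m")
      case True
      then show ?thesis
        using dvd \<open>i \<in> J\<close> by blast
    qed simp
  qed
  ultimately show ?thesis
    by simp
qed

lemma arith_structure_KnD:
  assumes "arith_structure_Kn n r" "i \<in> {1..n}"
  shows "0 < r i" "r i \<le> r 1" "r i dvd (\<Sum>j=1..n. r j)"
  using assms by (auto simp: arith_structure_Kn_def)

lemma arith_structure_entry_dvd_cofactor: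
  assumes A: "arith_structure_Kn n r" and p: "prime (r 1)"
    and i: "i \<in> {1..n}" and ne: "r i \<noteq> r 1"
  shows "r i dvd (\<Sum>j=1..n. r j) div r 1"
proof -
  have "0 < r i" "r i < r 1"
    using arith_structure_KnD[OF A i] ne by simp_all
  then have "coprime (r i) (r 1)"
    using p by (subst coprime_commute, intro prime_imp_coprime) (auto dest: dvd_imp_le)
  moreover have "r 1 * ((\<Sum>j=1..n. r j) div r 1) = (\<Sum>j=1..n. r j)"
    using arith_structure_KnD(3)[OF A] i by simp
  then have "r i dvd r 1 * ((\<Sum>j=1..n. r j) div r 1)"
    using arith_structure_KnD(3)[OF A i] by simp
  ultimately show ?thesis
    by (simp add: coprime_dvd_mult_right_iff)
qed

lemma sum_split_by_value:
  fixes f :: "'a \<Rightarrow> nat"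
  assumes "finite I"
  shows "sum f I = sum f {i\<in>I. f i \<noteq> c} + c * card {i\<in>I. f i = c}"
    and "card I = card {i\<in>I. f i \<noteq> c} + card {i\<in>I. f i = c}"
proof -
  have I: "I = {i\<in>I. f i \<noteq> c} \<union> {i\<in>I. f i = c}" by blast
  have "sum f I = sum f {i\<in>I. f i \<noteq> c} + sum f {i\<in>I. f i = c}"
    using assms by (subst I) (rule sum.union_disjoint, auto)
  also have "sum f {i\<in>I. f i = c} = c * card {i\<in>I. f i = c}"
    by (simp add: sum.cong[of _ _ f "\<lambda>_. c"])
  finally show "sum f I = sum f {i\<in>I. f i \<noteq> c} + c * card {i\<in>I. f i = c}" .
  show "card I = card {i\<in>I. f i \<noteq> c} + card {i\<in>I. f i = c}"
    using assms by (subst I) (rule card_Un_disjoint, auto)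
qed

lemma arith_structure_prime_first:
  assumes A: "arith_structure_Kn n r" and p: "prime (r 1)" and n: "1 \<le> n"
  defines "J \<equiv> {i\<in>{1..n}. r i \<noteq> r 1}" and "a \<equiv> card {i\<in>{1..n}. r i = r 1}"
  obtains m where "m \<le> n" "card J + a = n" "sum r J + r 1 * a = r 1 * m"
    "0 < sum r J" "sum r J \<le> card J * m" "\<forall>i\<in>J. r i dvd m"
proof
  define m where "m = (\<Sum>i=1..n. r i) div r 1"
  have "1 \<in> {1..n}"
    using n by simp
  note r1 = arith_structure_KnD[OF A this]
  then have S: "(\<Sum>i=1..n. r i) = r 1 * m"
    by (simp add: m_def)
  have "(\<Sum>i=1..n. r i) \<le> card {1..n} * r 1"
    using sum_bounded_above[of "{1..n}" r "r 1"] arith_structure_KnD(2)[OF A] by simp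
  with S r1 show "m \<le> n"
    by (simp add: mult.commute)
  show "card J + a = n" and sum: "sum r J + r 1 * a = r 1 * m"
    using sum_split_by_value[of "{1..n}" r "r 1"] S by (simp_all add: J_def a_def)
  show dvd: "\<forall>i\<in>J. r i dvd m"
    using arith_structure_entry_dvd_cofactor[OF A p] by (simp add: J_def m_def)
  have "J \<noteq> {}"
  proof
    assume "J = {}"
    then have "\<forall>i\<in>{1..n}. r i = r 1"
      unfolding J_def by blast
    then have "r ` {1..n} = {r 1}"
      using image_constant[OF \<open>1 \<in> {1..n}\<close>, of "r 1"] by (metis image_cong)
    moreover have "Gcd (r ` {1..n}) = 1"
      using A by (simp add: arith_structure_Kn_def)
    ultimately show False
      using p by simp
  qed
  moreover have "finite J" "\<forall>i\<in>J. 0 < r i"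
    using arith_structure_KnD(1)[OF A] by (simp_all add: J_def)
  ultimately show "0 < sum r J"
    by (simp add: sum_pos)
  with sum have "0 < m"
    by (cases m) simp_all
  then have "\<And>i. i \<in> J \<Longrightarrow> r i \<le> m"
    using dvd by (simp add: dvd_imp_le)
  then show "sum r J \<le> card J * m"
    using sum_bounded_above[of J r m] by simp
qed

text \<open>Here \<open>s = 79 (m - a)\<close> and \<open>k = 18 - a\<close>, so \<open>s \<le> k m\<close> reads
  \<open>(79 - m) (m - a) \<le> m (18 - m) \<le> 81\<close>; this forces \<open>m - a = 1\<close>, and then
  \<open>m\<^sup>2 - 19 m + 79 \<le> 0\<close>.\<close>

lemma multiplier_bounds_18_79:
  fixes m a s k :: nat
  assumes "m \<le> 18" "k + a = 18" "s + 79 * a = 79 * m" "0 < s" "s \<le> k * m"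
  shows "m = a + 1 \<and> 7 \<le> m \<and> m \<le> 12"
proof -
  have "a < m"
    using assms(3,4) by linarith
  have "m \<in> {..18}"
    using assms(1) by simp
  then show ?thesis
    using assms(2,3,5) \<open>a < m\<close>
    by (simp add: atMost_nat_numeral atMost_Suc) (elim disjE; simp; linarith)
qed

lemma deficit_not_sum_of_proper_divisors:
  assumes "m \<in> {7..12}"
  shows "\<not> sum_of ((\<lambda>d. m - d) ` {d. d dvd m \<and> d < m}) (m * (19 - m) - 79)"
proof -
  have D: "{d. d dvd m \<and> d < m} = {..<m} \<inter> {d. d dvd m}"
    by auto
  have "m = 7 \<or> m = 8 \<or> m = 9 \<or> m = 10 \<or> m = 11 \<or> m = 12"
    using assms by auto
  then show ?thesis
    unfolding D
    by (elim disjE; simp add: lessThan_nat_numeral lessThan_Suc Int_insert_left;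
        simp add: sum_of_pos_iff)
qed

theorem mainTheorem10:
  shows "\<not> (\<exists>r :: nat \<Rightarrow> nat. arith_structure_Kn 18 r \<and> r 1 = 79)"
proof
  assume "\<exists>r :: nat \<Rightarrow> nat. arith_structure_Kn 18 r \<and> r 1 = 79"
  then obtain r :: "nat \<Rightarrow> nat" where A: "arith_structure_Kn 18 r" and r1: "r 1 = 79"
    by blast
  define J where "J = {i\<in>{1..18::nat}. r i \<noteq> r 1}"
  define a where "a = card {i\<in>{1..18::nat}. r i = r 1}"
  have "prime (r 1)"
    using r1 by simp
  then obtain m where counts: "m \<le> 18" "card J + a = 18" "sum r J + 79 * a = 79 * m"
    "0 < sum r J" "sum r J \<le> card J * m" and dvd: "\<forall>i\<in>J. r i dvd m"
    using arith_structure_prime_first[OF A] r1 unfolding J_def a_def by auto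
  then have "m = a + 1" and m: "m \<in> {7..12}"
    using multiplier_bounds_18_79 by auto
  then have "card J = 19 - m" "sum r J = 79"
    using counts by simp_all
  moreover have "sum_of ((\<lambda>d. m - d) ` {d. d dvd m \<and> d < m}) (m * card J - sum r J)"
    using dvd m by (intro deficit_sum_of_proper_divisors) (auto simp: J_def)
  ultimately show False
    using deficit_not_sum_of_proper_divisors[OF m] by simp
qed

end
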